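(* The size $b$ of the smallest bidirectional scheme satisfies $\mathsf{MS}_{\mathrm{sub}}(b,n)\ge 2$ and $\mathsf{MS}_{\mathrm{ins}}(b,n)\ge 2$.
   Context: Strings are over an alphabet $\Sigma$ with at least two characters; $\mathsf{ed}$ is the edit distance. $\mathsf{MS}_{\mathrm{sub}}(C,n)=\max_{T\in\Sigma^n}\{C(T')/C(T): T'\in\Sigma^n,\ \mathsf{ed}(T,T')=1\}$ and $\mathsf{MS}_{\mathrm{ins}}(C,n)$ is the same with $T'\in\Sigma^{n+1}$. A bidirectional scheme of $T$ (length $n$) is a factorization $T=f_1\cdots f_b$ where each phrase $f_j=T[p_j..p_j+\ell_j-1]$ is either a single character (ground phrase) or is given a source $q_j\neq p_j$ with $T[q_j..q_j+\ell_j-1]=f_j$. It defines $F:[0..n]\to[0..n]$ by $F(p_j)=0$ for ground phrases, $F(p_j+k)=q_j+k$ for $0\le k<\ell_j$ otherwise, and $F(0)=0$; the scheme is valid if for every $x$ some iterate $F^m(x)=0$ ($m\ge1$). $b(T)$ is the minimum number of phrases of a valid bidirectional scheme of $T$. *)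

theory Defs
  imports Main "HOL.Real"
begin

text \<open>Strings are lists over an alphabet type 'a. Positions are 1-based:
  character T[i] (1 <= i <= n) is T ! (i - 1).\<close>

fun ed :: "'a list \<Rightarrow> 'a list \<Rightarrow> nat" where
  "ed [] ys = length ys"
| "ed xs [] = length xs"
| "ed (x # xs) (y # ys) =
     min (min (ed xs (y # ys) + 1) (ed (x # xs) ys + 1))
         (ed xs ys + (if x = y then 0 else 1))"

text \<open>A phrase is a pair (length, source): source None = ground phrase,
  source Some q = phrase copied from 1-based position q.\<close>
type_synonym phrase = "nat \<times> nat option"

definition pstart :: "phrase list \<Rightarrow> nat \<Rightarrow> nat" where
  "pstart S j = 1 + sum_list (map fst (take j S))"

definition schemeF :: "phrase list \<Rightarrow> nat \<Rightarrow> nat" where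
  "schemeF S x =
     (if x = 0 then 0
      else if (\<exists>j<length S. pstart S j \<le> x \<and> x < pstart S j + fst (S ! j))
      then (let j = (LEAST j. j < length S \<and> pstart S j \<le> x \<and> x < pstart S j + fst (S ! j))
            in (case snd (S ! j) of None \<Rightarrow> 0 | Some q \<Rightarrow> q + (x - pstart S j)))
      else 0)"

definition valid_bidir_scheme :: "'a list \<Rightarrow> phrase list \<Rightarrow> bool" where
  "valid_bidir_scheme T S \<longleftrightarrow>
     sum_list (map fst S) = length T
   \<and> (\<forall>j<length S.
        1 \<le> fst (S ! j)
      \<and> (case snd (S ! j) of
           None \<Rightarrow> fst (S ! j) = 1
         | Some q \<Rightarrow> q \<noteq> pstart S j \<and> 1 \<le> q \<and> q + fst (S ! j) - 1 \<le> length T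
                   \<and> (\<forall>k<fst (S ! j). T ! (q + k - 1) = T ! (pstart S j + k - 1))))
   \<and> (\<forall>x\<le>length T. \<exists>m\<ge>1. (schemeF S ^^ m) x = 0)"

definition bidir_b :: "'a list \<Rightarrow> nat" where
  "bidir_b T = (LEAST k. \<exists>S. valid_bidir_scheme T S \<and> length S = k)"

definition MS_sub :: "('a list \<Rightarrow> nat) \<Rightarrow> nat \<Rightarrow> real" where
  "MS_sub C n = Sup {real (C T') / real (C T) | T T'.
      length T = n \<and> length T' = n \<and> ed T T' = 1}"

definition MS_ins :: "('a list \<Rightarrow> nat) \<Rightarrow> nat \<Rightarrow> real" where
  "MS_ins C n = Sup {real (C T') / real (C T) | T T'.
      length T = n \<and> length T' = n + 1 \<and> ed T T' = 1}"

end

theory Submission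
  imports Defs
begin

text \<open>Following the copy map F from any position preserves the character and can only reach 0
  from a ground phrase, so every character of T is the content of some ground phrase.
  In a^k c a^k with k \<ge> 2 the ground phrase of c is the middle position, the phrases on
  either side of it cover k \<ge> 2 positions each, and a separate ground phrase for a is needed;
  hence b(a^k c a^k) \<ge> 4. On the other hand b(a^n) \<le> 2, using one ground phrase and one
  copy overlapping its own source. Substituting the middle character of a^(2k+1), or
  inserting c into the middle of a^(2k), therefore at least doubles b.\<close>

lemma pstart_0 [simp]: "pstart S 0 = 1"
  by (simp add: pstart_def)

lemma pstart_Cons_Suc [simp]: "pstart (s # S) (Suc j) = fst s + pstart S j"
  by (simp add: pstart_def)

lemma pstart_ge_1: "1 \<le> pstart S j"
  by (simp add: pstart_def)

lemma pstart_Suc: "j < length S \<Longrightarrow> pstart S (Suc j) = pstart S j + fst (S ! j)"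
  by (simp add: pstart_def take_Suc_conv_app_nth)

lemma pstart_mono: "i \<le> j \<Longrightarrow> pstart S i \<le> pstart S j"
  by (auto simp: pstart_def dest!: le_Suc_ex simp: take_add)

lemma phrase_end_le_pstart:
  "i < j \<Longrightarrow> i < length S \<Longrightarrow> pstart S i + fst (S ! i) \<le> pstart S j"
  using pstart_mono[of "Suc i" j S] by (simp add: pstart_Suc)

lemma schemeF_in_phrase:
  assumes j: "j < length S" "pstart S j \<le> x" "x < pstart S j + fst (S ! j)"
  shows "schemeF S x = (case snd (S ! j) of None \<Rightarrow> 0 | Some q \<Rightarrow> q + (x - pstart S j))"
proof -
  have "(LEAST j. j < length S \<and> pstart S j \<le> x \<and> x < pstart S j + fst (S ! j)) = j"
  proof (rule Least_equality)
    fix i assume "i < length S \<and> pstart S i \<le> x \<and> x < pstart S i + fst (S ! i)"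
    then show "j \<le> i"
      using phrase_end_le_pstart[of i j S] j by (meson leI order.strict_trans2 not_less)
  qed (use j in simp)
  moreover have "x \<noteq> 0" using j(2) pstart_ge_1[of S j] by simp
  ultimately show ?thesis using j unfolding schemeF_def Let_def by auto
qed

lemma phrase_containing:
  assumes "1 \<le> x" "x \<le> sum_list (map fst S)"
  obtains j where "j < length S" "pstart S j \<le> x" "x < pstart S j + fst (S ! j)"
  using assms
proof (induction S arbitrary: x thesis)
  case Nil then show ?case by simp
next
  case (Cons s S)
  show ?case
  proof (cases "x \<le> fst s")
    case True
    then show ?thesis using Cons.prems by (intro Cons.prems(1)[of 0]) auto
  next
    case False
    obtain j where "j < length S" "pstart S j \<le> x - fst s" "x - fst s < pstart S j + fst (S ! j)"
      by (rule Cons.IH[of "x - fst s"]) (use Cons.prems(2,3) False in auto)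
    then show ?thesis using False by (intro Cons.prems(1)[of "Suc j"]) auto
  qed
qed

lemma valid_bidir_scheme_length: "valid_bidir_scheme T S \<Longrightarrow> sum_list (map fst S) = length T"
  by (simp add: valid_bidir_scheme_def)

lemma valid_bidir_schemeD:
  assumes "valid_bidir_scheme T S" "j < length S"
  shows "snd (S ! j) = None \<Longrightarrow> fst (S ! j) = 1"
    and "snd (S ! j) = Some q \<Longrightarrow> 1 \<le> q \<and> q + fst (S ! j) - 1 \<le> length T
           \<and> (\<forall>k<fst (S ! j). T ! (q + k - 1) = T ! (pstart S j + k - 1))"
  using assms unfolding valid_bidir_scheme_def by auto

lemma schemeF_step:
  assumes v: "valid_bidir_scheme T S" and x: "1 \<le> x" "x \<le> length T"
  shows "(\<exists>j<length S. snd (S ! j) = None \<and> fst (S ! j) = 1 \<and> pstart S j = x)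
     \<or> (1 \<le> schemeF S x \<and> schemeF S x \<le> length T \<and> T ! (schemeF S x - 1) = T ! (x - 1))"
proof -
  obtain j where j: "j < length S" "pstart S j \<le> x" "x < pstart S j + fst (S ! j)"
    using phrase_containing[of x S] x valid_bidir_scheme_length[OF v] by auto
  note Fx = schemeF_in_phrase[OF j]
  show ?thesis
  proof (cases "snd (S ! j)")
    case None
    then have "fst (S ! j) = 1" using valid_bidir_schemeD(1)[OF v j(1)] by simp
    then show ?thesis using None Fx j by auto
  next
    case (Some q)
    then have q: "1 \<le> q" "q + fst (S ! j) - 1 \<le> length T"
      "\<forall>k<fst (S ! j). T ! (q + k - 1) = T ! (pstart S j + k - 1)"
      using valid_bidir_schemeD(2)[OF v j(1)] by auto
    have "T ! (q + (x - pstart S j) - 1) = T ! (pstart S j + (x - pstart S j) - 1)"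
      using q(3)[rule_format, of "x - pstart S j"] j by simp
    then show ?thesis using Some Fx q j by auto
  qed
qed

lemma valid_bidir_scheme_ground_phrase:
  assumes v: "valid_bidir_scheme T S" and i: "i < length T"
  obtains j where "j < length S" "snd (S ! j) = None" "fst (S ! j) = 1"
    "pstart S j \<le> length T" "T ! (pstart S j - 1) = T ! i"
proof -
  have ground: "\<exists>j<length S. snd (S ! j) = None \<and> fst (S ! j) = 1 \<and> pstart S j \<le> length T
      \<and> T ! (pstart S j - 1) = T ! (x - 1)"
    if "1 \<le> x" "x \<le> length T" "(schemeF S ^^ m) x = 0" "1 \<le> m" for x m
    using that
  proof (induction m arbitrary: x)
    case 0 then show ?case by simp
  next
    case (Suc m)
    have iter: "(schemeF S ^^ m) (schemeF S x) = 0"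
      using Suc.prems(3) by (simp add: funpow_Suc_right del: funpow.simps)
    from schemeF_step[OF v Suc.prems(1,2)] show ?case
    proof
      assume "1 \<le> schemeF S x \<and> schemeF S x \<le> length T \<and> T ! (schemeF S x - 1) = T ! (x - 1)"
      moreover from this have "m \<noteq> 0" using iter by (cases m) auto
      ultimately show ?thesis using Suc.IH[of "schemeF S x"] iter by auto
    qed (use Suc.prems in auto)
  qed
  obtain m where "m \<ge> 1" "(schemeF S ^^ m) (Suc i) = 0"
    using v i unfolding valid_bidir_scheme_def by (meson Suc_leI)
  then show ?thesis using ground[of "Suc i" m] that i by auto
qed

lemma valid_bidir_scheme_all_ground: "valid_bidir_scheme T (replicate (length T) (1, None))"
proof -
  let ?S = "replicate (length T) (1::nat, None::nat option)"
  have len: "sum_list (map fst ?S) = length T"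
    by (simp add: sum_list_replicate)
  have "schemeF ?S x = 0" if x: "x \<le> length T" for x
  proof (cases "x = 0")
    case False
    obtain j where "j < length ?S" "pstart ?S j \<le> x" "x < pstart ?S j + fst (?S ! j)"
      by (rule phrase_containing[of x ?S]) (use len x False in auto)
    then show ?thesis using schemeF_in_phrase by fastforce
  qed (simp add: schemeF_def)
  then show ?thesis
    unfolding valid_bidir_scheme_def using len by (auto intro!: exI[of _ 1])
qed

lemma bidir_b_witness:
  obtains S where "valid_bidir_scheme T S" "length S = bidir_b T"
proof -
  have "\<exists>S. valid_bidir_scheme T S \<and> length S = bidir_b T"
    unfolding bidir_b_def by (rule LeastI_ex) (use valid_bidir_scheme_all_ground in blast)
  then show thesis using that by blast
qed

lemma bidir_b_le: "valid_bidir_scheme T S \<Longrightarrow> bidir_b T \<le> length S"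
  unfolding bidir_b_def by (rule Least_le) blast

lemma bidir_b_le_length: "bidir_b T \<le> length T"
  using bidir_b_le[OF valid_bidir_scheme_all_ground[of T]] by simp

lemma bidir_b_pos:
  assumes "T \<noteq> []"
  shows "0 < bidir_b T"
proof -
  obtain S where "valid_bidir_scheme T S" "length S = bidir_b T"
    by (rule bidir_b_witness)
  then show ?thesis using valid_bidir_scheme_length[of T S] assms by (cases S) auto
qed

lemma bidir_b_replicate_le_2: "bidir_b (replicate n a) \<le> 2"
proof (cases "n \<le> 2")
  case True
  then show ?thesis using bidir_b_le_length[of "replicate n a"] by simp
next
  case False
  define S where "S = [(1::nat, None::nat option), (n - 1, Some 1)]"
  have pstart_1: "pstart S 1 = 2" by (simp add: S_def pstart_def)
  have F: "schemeF S x = x - 1" if "x \<le> n" for x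
  proof -
    consider "x = 0" | "x = 1" | "2 \<le> x" by linarith
    then show ?thesis
    proof cases
      case 1 then show ?thesis by (simp add: schemeF_def)
    next
      case 2 then show ?thesis using schemeF_in_phrase[of 0 S x] by (simp add: S_def)
    next
      case 3 then show ?thesis
        using schemeF_in_phrase[of 1 S x] pstart_1 that False by (simp add: S_def)
    qed
  qed
  have iterate: "(schemeF S ^^ m) x = x - m" if "x \<le> n" for x m
    using that by (induction m) (simp_all add: F)
  have reaches_0: "\<exists>m\<ge>1. (schemeF S ^^ m) x = 0" if "x \<le> n" for x
  proof (intro exI conjI)
    show "(schemeF S ^^ Suc x) x = 0" using iterate[OF that, of "Suc x"] by simp
  qed simp
  have "valid_bidir_scheme (replicate n a) S"
    using False pstart_1 reaches_0 unfolding valid_bidir_scheme_def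
    by (auto simp: S_def less_Suc_eq)
  then have "bidir_b (replicate n a) \<le> length S" by (rule bidir_b_le)
  then show ?thesis by (simp add: S_def)
qed

lemma nth_replicate_Cons_replicate:
  "p < 2 * k + 1 \<Longrightarrow> (replicate k a @ c # replicate k a) ! p = (if p = k then c else a)"
  by (auto simp: nth_append nth_Cons' less_diff_conv)

lemma sum_phrase_lengths_split:
  "j < length S \<Longrightarrow>
    sum_list (map fst S) = (pstart S j - 1) + fst (S ! j) + sum_list (map fst (drop (Suc j) S))"
proof -
  assume "j < length S"
  then have "sum_list (map fst S) = sum_list (map fst (take j S @ S ! j # drop (Suc j) S))"
    by (simp add: Cons_nth_drop_Suc)
  then show ?thesis by (simp add: pstart_def)
qed

lemma bidir_b_replicate_Cons_replicate_ge_4: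
  assumes "a \<noteq> c" and "2 \<le> k"
  shows "4 \<le> bidir_b (replicate k a @ c # replicate k a)"
proof (rule ccontr)
  let ?T = "replicate k a @ c # replicate k a"
  obtain S where v: "valid_bidir_scheme ?T S" and lS: "length S = bidir_b ?T"
    by (rule bidir_b_witness)
  assume "\<not> 4 \<le> bidir_b ?T"
  then have "length S \<le> 3" using lS by simp
  obtain jc where jc: "jc < length S" "fst (S ! jc) = 1" "pstart S jc = k + 1"
  proof -
    obtain j where "j < length S" "fst (S ! j) = 1" "pstart S j \<le> length ?T"
      "?T ! (pstart S j - 1) = ?T ! k"
      by (rule valid_bidir_scheme_ground_phrase[OF v, of k]) simp_all
    moreover from this have "pstart S j - 1 = k"
      using assms(1) pstart_ge_1[of S j] by (auto simp: nth_replicate_Cons_replicate split: if_splits)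
    ultimately show thesis using that pstart_ge_1[of S j] by simp
  qed
  obtain ja where ja: "ja < length S" "fst (S ! ja) = 1" "ja \<noteq> jc"
  proof -
    obtain j where "j < length S" "fst (S ! j) = 1" "?T ! (pstart S j - 1) = ?T ! 0"
      by (rule valid_bidir_scheme_ground_phrase[OF v, of 0]) simp_all
    moreover from this have "j \<noteq> jc"
      using assms jc(3) by (auto simp: nth_replicate_Cons_replicate)
    ultimately show thesis using that by simp
  qed
  \<comment> \<open>Both sides of the ground phrase of c are nonempty, so with three phrases each side
    is a single phrase of length k \<ge> 2, leaving no room for a ground phrase of a.\<close>
  have before: "sum_list (map fst (take jc S)) = k"
    using jc(3) by (simp add: pstart_def)
  have after: "sum_list (map fst (drop (Suc jc) S)) = k"
    using sum_phrase_lengths_split[OF jc(1)] valid_bidir_scheme_length[OF v] jc by simp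
  have "jc \<noteq> 0" using before assms(2) by (cases jc) auto
  moreover have "Suc jc < length S" using after assms(2) by (cases "Suc jc < length S") auto
  ultimately have "length S = 3" and "jc = 1" using \<open>length S \<le> 3\<close> by auto
  obtain s0 s1 s2 where S: "S = [s0, s1, s2]"
    using \<open>length S = 3\<close> by (auto simp: length_Suc_conv numeral_3_eq_3)
  have "fst s0 = k" "fst s2 = k"
    using before after \<open>jc = 1\<close> by (simp_all add: S)
  moreover have "ja = 0 \<or> ja = 2" using ja \<open>length S = 3\<close> \<open>jc = 1\<close> by linarith
  ultimately show False using ja(2) assms(2) by (auto simp: S)
qed

lemma ed_self [simp]: "ed xs xs = 0"
  by (induction xs) auto

lemma ed_eq_0_iff: "ed xs ys = 0 \<longleftrightarrow> xs = ys"
proof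
  show "ed xs ys = 0 \<Longrightarrow> xs = ys"
    by (induction xs ys rule: ed.induct) (auto split: if_splits)
qed simp

lemma ed_append_left_le: "ed (zs @ xs) (zs @ ys) \<le> ed xs ys"
  by (induction zs) (auto intro: le_trans)

lemma ed_substitution: "a \<noteq> c \<Longrightarrow> ed (xs @ a # ys) (xs @ c # ys) = 1"
  using ed_append_left_le[of xs "a # ys" "c # ys"] ed_eq_0_iff[of "xs @ a # ys" "xs @ c # ys"]
  by simp

lemma ed_insertion: "ed (xs @ ys) (xs @ c # ys) = 1"
proof -
  have "ed ys (c # ys) \<le> 1"
    by (cases ys) (simp_all add: min_le_iff_disj)
  then show ?thesis
    using ed_append_left_le[of xs ys "c # ys"] ed_eq_0_iff[of "xs @ ys" "xs @ c # ys"] by simp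
qed

lemma bdd_above_bidir_b_ratios:
  "bdd_above {real (bidir_b T') / real (bidir_b T) | T T' :: 'a list.
     length T = n \<and> length T' = m \<and> ed T T' = 1}"
proof (rule bdd_aboveI)
  fix r assume "r \<in> {real (bidir_b T') / real (bidir_b T) | T T' :: 'a list.
     length T = n \<and> length T' = m \<and> ed T T' = 1}"
  then obtain T T' :: "'a list" where r: "r = real (bidir_b T') / real (bidir_b T)" and "length T' = m"
    by blast
  have "r \<le> real (bidir_b T')"
    unfolding r by (cases "bidir_b T = 0") (simp_all add: divide_le_eq mult_le_cancel_left1)
  also have "\<dots> \<le> real m"
    using bidir_b_le_length[of T'] \<open>length T' = m\<close> by simp
  finally show "r \<le> real m" .
qed

lemma bidir_b_ratio_le_MS_sub:
  fixes T T' :: "'a list"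
  shows "length T = n \<Longrightarrow> length T' = n \<Longrightarrow> ed T T' = 1 \<Longrightarrow>
    real (bidir_b T') / real (bidir_b T) \<le> MS_sub (bidir_b :: 'a list \<Rightarrow> nat) n"
  unfolding MS_sub_def by (rule cSup_upper[OF _ bdd_above_bidir_b_ratios]) blast

lemma bidir_b_ratio_le_MS_ins:
  fixes T T' :: "'a list"
  shows "length T = n \<Longrightarrow> length T' = n + 1 \<Longrightarrow> ed T T' = 1 \<Longrightarrow>
    real (bidir_b T') / real (bidir_b T) \<le> MS_ins (bidir_b :: 'a list \<Rightarrow> nat) n"
  unfolding MS_ins_def by (rule cSup_upper[OF _ bdd_above_bidir_b_ratios]) blast

lemma bidir_b_ratio_ge_2:
  assumes "a \<noteq> c" "2 \<le> k" "0 < n"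
  shows "2 \<le> real (bidir_b (replicate k a @ c # replicate k a)) / real (bidir_b (replicate n a))"
proof -
  have "0 < bidir_b (replicate n a)" using assms(3) by (intro bidir_b_pos) simp
  then show ?thesis
    using bidir_b_replicate_Cons_replicate_ge_4[OF assms(1,2)] bidir_b_replicate_le_2[of n a]
    by (simp add: le_divide_eq)
qed

lemma MS_sub_bidir_b_ge_2:
  fixes a c :: 'a
  assumes "a \<noteq> c" "2 \<le> k"
  shows "2 \<le> MS_sub (bidir_b :: 'a list \<Rightarrow> nat) (2 * k + 1)"
proof -
  have "replicate (2 * k + 1) a = replicate k a @ a # replicate k a"
    by (simp add: replicate_add replicate_append_same mult_2)
  then have "real (bidir_b (replicate k a @ c # replicate k a)) / real (bidir_b (replicate (2 * k + 1) a))
      \<le> MS_sub (bidir_b :: 'a list \<Rightarrow> nat) (2 * k + 1)"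
    by (intro bidir_b_ratio_le_MS_sub) (simp_all add: ed_substitution assms(1))
  with bidir_b_ratio_ge_2[OF assms, of "2 * k + 1"] show ?thesis by linarith
qed

lemma MS_ins_bidir_b_ge_2:
  fixes a c :: 'a
  assumes "a \<noteq> c" "2 \<le> k"
  shows "2 \<le> MS_ins (bidir_b :: 'a list \<Rightarrow> nat) (2 * k)"
proof -
  have "replicate (2 * k) a = replicate k a @ replicate k a"
    by (simp add: replicate_add[symmetric] mult_2)
  then have "real (bidir_b (replicate k a @ c # replicate k a)) / real (bidir_b (replicate (2 * k) a))
      \<le> MS_ins (bidir_b :: 'a list \<Rightarrow> nat) (2 * k)"
    by (intro bidir_b_ratio_le_MS_ins) (simp_all add: ed_insertion)
  moreover have "0 < 2 * k" using assms(2) by simp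
  ultimately show ?thesis using bidir_b_ratio_ge_2[OF assms, of "2 * k"] by linarith
qed

theorem mainTheorem6:
  assumes "\<exists>a c :: 'a. a \<noteq> c"
  shows "(\<forall>N. \<exists>n\<ge>N. MS_sub (bidir_b :: 'a list \<Rightarrow> nat) n \<ge> 2)
       \<and> (\<forall>N. \<exists>n\<ge>N. MS_ins (bidir_b :: 'a list \<Rightarrow> nat) n \<ge> 2)"
proof (intro conjI allI)
  obtain a c :: 'a where ac: "a \<noteq> c" using assms by blast
  fix N :: nat
  let ?k = "max 2 N"
  show "\<exists>n\<ge>N. MS_sub (bidir_b :: 'a list \<Rightarrow> nat) n \<ge> 2"
    using MS_sub_bidir_b_ge_2[OF ac, of ?k] by (intro exI[of _ "2 * ?k + 1"]) auto
  show "\<exists>n\<ge>N. MS_ins (bidir_b :: 'a list \<Rightarrow> nat) n \<ge> 2"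
    using MS_ins_bidir_b_ge_2[OF ac, of ?k] by (intro exI[of _ "2 * ?k"]) auto
qed

end
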